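(* Let $D\ge 1$, $\Omega=\{0,1,\dots,D-1\}$, and let $S_1,\dots,S_n\subseteq\Omega$ be nonempty sets. Let $\pi:\Omega\to\Omega$ be a permutation, applied to every set, and put $z_i=\min \pi(S_i)$ for $i=1,\dots,n$. Fix an integer $b\ge 1$ and let $e_{i,t}$ denote the $t$-th lowest bit of the binary representation of $z_i$. Then each of the following symmetric $n\times n$ matrices is positive (semi)definite, i.e. satisfies $\sum_{i,j}c_ic_jK_{ij}\ge 0$ for all $c\in\mathbb{R}^n$: (1) the resemblance matrix $\mathbf{R}$ with $R_{ij}=\frac{|S_i\cap S_j|}{|S_i\cup S_j|}$; (2) the minwise hashing matrix $\mathbf{M}$ with $M_{ij}=1\{z_i=z_j\}$; (3) the $b$-bit minwise hashing matrix $\mathbf{M}^{(b)}$ with $M^{(b)}_{ij}=\prod_{t=1}^b 1\{e_{i,t}=e_{j,t}\}$. Consequently, if $\pi_1,\dots,\pi_k$ are $k$ permutations (e.g. independent random permutations) and $\mathbf{M}^{(b)}_{(s)}$ denotes the $b$-bit minwise hashing matrix generated by $\pi_s$, then $\sum_{s=1}^k\mathbf{M}^{(b)}_{(s)}$ is also positive (semi)definite.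
   Context: Here "positive definite" is used in the sense of nonnegative definite: a symmetric matrix $\mathbf K$ with $\sum_{ij}c_ic_jK_{ij}\ge0$ for all real vectors $c$. $1\{\cdot\}$ denotes the indicator function. *)

theory Defs
  imports Complex_Main
begin

definition psd_matrix :: "nat \<Rightarrow> (nat \<Rightarrow> nat \<Rightarrow> real) \<Rightarrow> bool" where
  "psd_matrix n K \<longleftrightarrow>
     (\<forall>i<n. \<forall>j<n. K i j = K j i) \<and>
     (\<forall>c :: nat \<Rightarrow> real. (\<Sum>i<n. \<Sum>j<n. c i * c j * K i j) \<ge> 0)"

definition ind :: "bool \<Rightarrow> real" where
  "ind P = (if P then 1 else 0)"

definition minhash :: "(nat \<Rightarrow> nat) \<Rightarrow> nat set \<Rightarrow> nat" where
  "minhash \<pi> S = Min (\<pi> ` S)"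

definition bbit_entry :: "nat \<Rightarrow> nat \<Rightarrow> nat \<Rightarrow> real" where
  "bbit_entry b x y = (\<Prod>t\<in>{1..b}. ind (bit x (t - 1) = bit y (t - 1)))"

end

theory Submission
  imports Defs "HOL-Combinatorics.Permutations"
begin

text \<open>The minwise and b-bit kernels are matrices of the form 1{f i = f j}, i.e. Gram matrices of
  indicator vectors, hence positive semidefinite; a sum of such matrices stays so.
  For the resemblance, group the permutations of the ground set by the element of
  A \<union> B at which they attain their minimum on A \<union> B. Transpositions show that all groups have the
  same size, and the minimal hashes of A and B agree exactly when that element lies in A \<inter> B.
  Thus |A \<inter> B| / |A \<union> B| is the fraction of permutations under which the minhashes agree,
  an average of minwise kernels.\<close>

lemma psd_matrix_cong:
  assumes "psd_matrix n K" "\<And>i j. i < n \<Longrightarrow> j < n \<Longrightarrow> K i j = K' i j"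
  shows "psd_matrix n K'"
proof -
  have "(\<Sum>i<n. \<Sum>j<n. c i * c j * K i j) = (\<Sum>i<n. \<Sum>j<n. c i * c j * K' i j)" for c
    using assms(2) by (intro sum.cong) auto
  with assms show ?thesis unfolding psd_matrix_def by auto
qed

lemma psd_matrix_sum:
  assumes "\<And>s. s \<in> I \<Longrightarrow> psd_matrix n (K s)"
  shows "psd_matrix n (\<lambda>i j. \<Sum>s\<in>I. K s i j)"
proof -
  have "(\<Sum>i<n. \<Sum>j<n. c i * c j * (\<Sum>s\<in>I. K s i j)) =
        (\<Sum>s\<in>I. \<Sum>i<n. \<Sum>j<n. c i * c j * K s i j)" for c
    by (simp add: sum_distrib_left sum.swap[of _ I])
  moreover have "(\<Sum>s\<in>I. \<Sum>i<n. \<Sum>j<n. c i * c j * K s i j) \<ge> 0" for c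
    by (rule sum_nonneg) (use assms in \<open>auto simp: psd_matrix_def\<close>)
  moreover have "\<forall>i<n. \<forall>j<n. (\<Sum>s\<in>I. K s i j) = (\<Sum>s\<in>I. K s j i)"
    using assms unfolding psd_matrix_def by (auto intro!: sum.cong)
  ultimately show ?thesis unfolding psd_matrix_def by auto
qed

lemma psd_matrix_scale:
  assumes "a \<ge> 0" "psd_matrix n K"
  shows "psd_matrix n (\<lambda>i j. a * K i j)"
proof -
  have "(\<Sum>i<n. \<Sum>j<n. c i * c j * (a * K i j)) = a * (\<Sum>i<n. \<Sum>j<n. c i * c j * K i j)" for c
    by (simp add: sum_distrib_left mult_ac)
  with assms show ?thesis unfolding psd_matrix_def by auto
qed

lemma psd_matrix_rank_one: "psd_matrix n (\<lambda>i j. u i * u j)"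
proof -
  have "(\<Sum>i<n. \<Sum>j<n. c i * c j * (u i * u j)) = (\<Sum>i<n. c i * u i) * (\<Sum>j<n. c j * u j)" for c
    by (simp add: sum_product mult_ac)
  then show ?thesis unfolding psd_matrix_def by simp
qed

lemma sum_ind_eq_ind:
  assumes "finite V" "x \<in> V"
  shows "(\<Sum>v\<in>V. ind (x = v) * ind (y = v)) = ind (x = y)"
proof -
  have "(\<Sum>v\<in>V. ind (x = v) * ind (y = v)) = (\<Sum>v\<in>V. if v = x then ind (x = y) else 0)"
    by (intro sum.cong) (auto simp: ind_def)
  also have "\<dots> = ind (x = y)"
    using assms by simp
  finally show ?thesis .
qed

lemma psd_matrix_ind_eq: "psd_matrix n (\<lambda>i j. ind (f i = f j))"
proof -
  have "psd_matrix n (\<lambda>i j. \<Sum>v\<in>f ` {..<n}. ind (f i = v) * ind (f j = v))"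
    by (intro psd_matrix_sum psd_matrix_rank_one)
  then show ?thesis
    by (rule psd_matrix_cong) (simp add: sum_ind_eq_ind)
qed

lemma prod_ind: "finite A \<Longrightarrow> (\<Prod>x\<in>A. ind (P x)) = ind (\<forall>x\<in>A. P x)"
  by (induction A rule: finite_induct) (auto simp: ind_def)

lemma bbit_entry_eq_ind_take_bit: "bbit_entry b x y = ind (take_bit b x = take_bit b y)"
proof -
  have "(\<forall>t\<in>{1..b}. bit x (t - 1) = bit y (t - 1)) \<longleftrightarrow> (\<forall>t<b. bit x t = bit y t)"
    unfolding image_Suc_lessThan[symmetric] by auto
  also have "\<dots> \<longleftrightarrow> take_bit b x = take_bit b y"
    by (auto simp: bit_eq_iff bit_take_bit_iff)
  finally show ?thesis
    unfolding bbit_entry_def by (simp add: prod_ind)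
qed

lemma psd_matrix_bbit_entry: "psd_matrix n (\<lambda>i j. bbit_entry b (g i) (g j))"
  using psd_matrix_ind_eq[of n "\<lambda>i. take_bit b (g i)"] by (simp add: bbit_entry_eq_ind_take_bit)

definition perms_min_at :: "'a set \<Rightarrow> 'a set \<Rightarrow> 'a \<Rightarrow> ('a \<Rightarrow> 'a::linorder) set" where
  "perms_min_at W U x = {\<sigma>. \<sigma> permutes W \<and> (\<forall>y\<in>U. y \<noteq> x \<longrightarrow> \<sigma> x < \<sigma> y)}"

lemma perms_min_at_Min:
  assumes "\<sigma> \<in> perms_min_at W U x" "x \<in> C" "C \<subseteq> U" "finite U"
  shows "Min (\<sigma> ` C) = \<sigma> x"
proof (rule Min_eqI)
  show "finite (\<sigma> ` C)" using assms(3,4) finite_subset by blast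
  show "\<sigma> x \<le> z" if "z \<in> \<sigma> ` C" for z
    using assms that unfolding perms_min_at_def by (cases "z = \<sigma> x") (auto intro: less_imp_le)
qed (use assms(2) in blast)

lemma perms_min_at_Min_less:
  assumes "\<sigma> \<in> perms_min_at W U x" "x \<notin> C" "C \<subseteq> U" "C \<noteq> {}" "finite U"
  shows "\<sigma> x < Min (\<sigma> ` C)"
  using assms finite_subset[OF assms(3,5)] unfolding perms_min_at_def by (subst Min_gr_iff) auto

lemma perms_min_at_disjoint:
  assumes "x \<in> U" "x' \<in> U" "x \<noteq> x'"
  shows "perms_min_at W U x \<inter> perms_min_at W U x' = {}"
  using assms unfolding perms_min_at_def by fastforce

lemma permutations_eq_Union_perms_min_at:
  assumes "finite U" "U \<noteq> {}"
  shows "{\<sigma>. \<sigma> permutes W} = (\<Union>x\<in>U. perms_min_at W U x)"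
proof (intro equalityI subsetI)
  fix \<sigma> :: "'a \<Rightarrow> 'a" assume "\<sigma> \<in> {\<sigma>. \<sigma> permutes W}"
  then have \<sigma>: "\<sigma> permutes W" by simp
  have "Min (\<sigma> ` U) \<in> \<sigma> ` U"
    using assms by (intro Min_in) auto
  then obtain x where x: "x \<in> U" "\<sigma> x = Min (\<sigma> ` U)" by auto
  have "\<sigma> x < \<sigma> y" if "y \<in> U" "y \<noteq> x" for y
  proof -
    have "\<sigma> x \<le> \<sigma> y" using x that assms by simp
    moreover have "\<sigma> x \<noteq> \<sigma> y" using permutes_inj[OF \<sigma>] that by (auto dest: injD)
    ultimately show ?thesis by simp
  qed
  with x(1) \<sigma> show "\<sigma> \<in> (\<Union>x\<in>U. perms_min_at W U x)"
    unfolding perms_min_at_def by blast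
qed (auto simp: perms_min_at_def)

lemma perms_min_at_compose_transpose:
  assumes "\<sigma> \<in> perms_min_at W U x" "x \<in> U" "x' \<in> U" "U \<subseteq> W"
  shows "\<sigma> \<circ> transpose x x' \<in> perms_min_at W U x'"
proof -
  have "\<sigma> \<circ> transpose x x' permutes W"
    using assms by (intro permutes_compose permutes_swap_id) (auto simp: perms_min_at_def)
  moreover have "(\<sigma> \<circ> transpose x x') x' < (\<sigma> \<circ> transpose x x') y" if "y \<in> U" "y \<noteq> x'" for y
    using assms that unfolding perms_min_at_def by (cases "y = x") (auto simp: transpose_def)
  ultimately show ?thesis unfolding perms_min_at_def by blast
qed

lemma card_perms_min_at_eq:
  assumes "x \<in> U" "x' \<in> U" "U \<subseteq> W"
  shows "card (perms_min_at W U x) = card (perms_min_at W U x')"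
proof (rule bij_betw_same_card[of "\<lambda>\<sigma>. \<sigma> \<circ> transpose x x'"],
       rule bij_betwI[where g = "\<lambda>\<sigma>. \<sigma> \<circ> transpose x' x"])
  show "(\<lambda>\<sigma>. \<sigma> \<circ> transpose x x') \<in> perms_min_at W U x \<rightarrow> perms_min_at W U x'"
    "(\<lambda>\<sigma>. \<sigma> \<circ> transpose x' x) \<in> perms_min_at W U x' \<rightarrow> perms_min_at W U x"
    using assms perms_min_at_compose_transpose by blast+
qed (simp_all add: comp_assoc transpose_commute)

lemma card_Union_perms_min_at:
  assumes "finite W" "U \<subseteq> W" "V \<subseteq> U" "x\<^sub>0 \<in> U"
  shows "card (\<Union>x\<in>V. perms_min_at W U x) = card V * card (perms_min_at W U x\<^sub>0)"
proof -
  have "finite (perms_min_at W U x)" for x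
    by (rule finite_subset[OF _ finite_permutations[OF assms(1)]]) (auto simp: perms_min_at_def)
  moreover have "finite V"
    using assms by (meson finite_subset order_trans)
  moreover have "perms_min_at W U x \<inter> perms_min_at W U x' = {}" if "x \<in> V" "x' \<in> V" "x \<noteq> x'" for x x'
    using that assms(3) by (intro perms_min_at_disjoint) auto
  ultimately have "card (\<Union>x\<in>V. perms_min_at W U x) = (\<Sum>x\<in>V. card (perms_min_at W U x))"
    by (intro card_UN_disjoint) auto
  also have "\<dots> = (\<Sum>x\<in>V. card (perms_min_at W U x\<^sub>0))"
    using assms by (intro sum.cong refl card_perms_min_at_eq) auto
  also have "\<dots> = card V * card (perms_min_at W U x\<^sub>0)"
    by simp
  finally show ?thesis .
qed

lemma minhash_eq_iff_perms_min_at: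
  assumes "\<sigma> permutes W" "finite A" "finite B" "A \<noteq> {}" "B \<noteq> {}"
  shows "minhash \<sigma> A = minhash \<sigma> B \<longleftrightarrow> \<sigma> \<in> (\<Union>x\<in>A \<inter> B. perms_min_at W (A \<union> B) x)"
proof -
  have fin: "finite (A \<union> B)" using assms by blast
  obtain x where x: "x \<in> A \<union> B" "\<sigma> \<in> perms_min_at W (A \<union> B) x"
    using assms permutations_eq_Union_perms_min_at[OF fin, of W] by blast
  note Min_at = perms_min_at_Min[OF x(2) _ _ fin] and Min_less = perms_min_at_Min_less[OF x(2) _ _ _ fin]
  have "minhash \<sigma> A = minhash \<sigma> B \<longleftrightarrow> x \<in> A \<inter> B"
  proof (cases "x \<in> A"; cases "x \<in> B")
    assume "x \<in> A" "x \<notin> B"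
    then have "Min (\<sigma> ` A) = \<sigma> x" "\<sigma> x < Min (\<sigma> ` B)"
      using Min_at[of A] Min_less[of B] assms by auto
    with \<open>x \<notin> B\<close> show ?thesis unfolding minhash_def by simp
  next
    assume "x \<notin> A" "x \<in> B"
    then have "Min (\<sigma> ` B) = \<sigma> x" "\<sigma> x < Min (\<sigma> ` A)"
      using Min_at[of B] Min_less[of A] assms by auto
    with \<open>x \<notin> A\<close> show ?thesis unfolding minhash_def by simp
  qed (use x(1) Min_at in \<open>auto simp: minhash_def\<close>)
  also have "\<dots> \<longleftrightarrow> \<sigma> \<in> (\<Union>x\<in>A \<inter> B. perms_min_at W (A \<union> B) x)"
    using x perms_min_at_disjoint[of x "A \<union> B" _ W] by blast
  finally show ?thesis .
qed

lemma resemblance_eq_average_minhash: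
  assumes "finite W" "A \<subseteq> W" "B \<subseteq> W" "A \<noteq> {}" "B \<noteq> {}"
  defines "P \<equiv> {\<sigma>. \<sigma> permutes W}"
  shows "real (card (A \<inter> B)) / real (card (A \<union> B)) =
         (\<Sum>\<sigma>\<in>P. 1 / real (card P) * ind (minhash \<sigma> A = minhash \<sigma> B))"
proof -
  have fin: "finite A" "finite B" "finite P"
    using assms finite_subset finite_permutations unfolding P_def by blast+
  obtain x\<^sub>0 where x\<^sub>0: "x\<^sub>0 \<in> A \<union> B" using assms by blast
  define N where "N = card (perms_min_at W (A \<union> B) x\<^sub>0)"
  have card_P: "card P = card (A \<union> B) * N"
    using permutations_eq_Union_perms_min_at[of "A \<union> B" W] card_Union_perms_min_at[of W "A \<union> B" "A \<union> B" x\<^sub>0]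
      fin assms x\<^sub>0 unfolding P_def N_def by auto
  have "{\<sigma>\<in>P. minhash \<sigma> A = minhash \<sigma> B} = (\<Union>x\<in>A \<inter> B. perms_min_at W (A \<union> B) x)"
    using minhash_eq_iff_perms_min_at[of _ W A B] fin assms
    unfolding P_def perms_min_at_def by blast
  then have card_agree: "card {\<sigma>\<in>P. minhash \<sigma> A = minhash \<sigma> B} = card (A \<inter> B) * N"
    using card_Union_perms_min_at[of W "A \<union> B" "A \<inter> B" x\<^sub>0] assms x\<^sub>0 unfolding N_def by auto
  have "id \<in> P"
    unfolding P_def by simp
  then have "card P \<noteq> 0"
    using fin(3) by auto
  then have "N \<noteq> 0" using card_P by simp
  have "(\<Sum>\<sigma>\<in>P. ind (minhash \<sigma> A = minhash \<sigma> B)) = real (card {\<sigma>\<in>P. minhash \<sigma> A = minhash \<sigma> B})"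
    unfolding ind_def using fin(3) by (simp add: sum.If_cases Int_def)
  then have "(\<Sum>\<sigma>\<in>P. 1 / real (card P) * ind (minhash \<sigma> A = minhash \<sigma> B)) =
        real (card {\<sigma>\<in>P. minhash \<sigma> A = minhash \<sigma> B}) / real (card P)"
    by (simp flip: sum_divide_distrib)
  also have "\<dots> = real (card (A \<inter> B)) / real (card (A \<union> B))"
    using \<open>N \<noteq> 0\<close> by (simp add: card_agree card_P)
  finally show ?thesis ..
qed

lemma psd_matrix_resemblance:
  fixes S :: "nat \<Rightarrow> nat set"
  assumes "finite W" "\<And>i. i < n \<Longrightarrow> S i \<subseteq> W \<and> S i \<noteq> {}"
  shows "psd_matrix n (\<lambda>i j. real (card (S i \<inter> S j)) / real (card (S i \<union> S j)))"
proof -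
  let ?P = "{\<sigma>. \<sigma> permutes W}"
  have "psd_matrix n (\<lambda>i j. \<Sum>\<sigma>\<in>?P. 1 / real (card ?P) * ind (minhash \<sigma> (S i) = minhash \<sigma> (S j)))"
    by (intro psd_matrix_sum psd_matrix_scale psd_matrix_ind_eq) simp
  then show ?thesis
    by (rule psd_matrix_cong) (use assms in \<open>simp add: resemblance_eq_average_minhash\<close>)
qed

theorem theorem2:
  fixes D n b k :: nat
    and S :: "nat \<Rightarrow> nat set"
    and \<pi> :: "nat \<Rightarrow> nat"
    and \<pi>s :: "nat \<Rightarrow> nat \<Rightarrow> nat"
  assumes "D \<ge> 1"
    and "\<And>i. i < n \<Longrightarrow> S i \<subseteq> {..<D} \<and> S i \<noteq> {}"
    and "bij_betw \<pi> {..<D} {..<D}"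
    and "b \<ge> 1"
    and "\<And>s. s \<in> {1..k} \<Longrightarrow> bij_betw (\<pi>s s) {..<D} {..<D}"
  shows "psd_matrix n (\<lambda>i j. real (card (S i \<inter> S j)) / real (card (S i \<union> S j)))
       \<and> psd_matrix n (\<lambda>i j. ind (minhash \<pi> (S i) = minhash \<pi> (S j)))
       \<and> psd_matrix n (\<lambda>i j. bbit_entry b (minhash \<pi> (S i)) (minhash \<pi> (S j)))
       \<and> psd_matrix n (\<lambda>i j. \<Sum>s\<in>{1..k}.
             bbit_entry b (minhash (\<pi>s s) (S i)) (minhash (\<pi>s s) (S j)))"
proof (intro conjI)
  show "psd_matrix n (\<lambda>i j. real (card (S i \<inter> S j)) / real (card (S i \<union> S j)))"
    using assms(2) by (intro psd_matrix_resemblance[of "{..<D}"]) auto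
  show "psd_matrix n (\<lambda>i j. \<Sum>s\<in>{1..k}.
             bbit_entry b (minhash (\<pi>s s) (S i)) (minhash (\<pi>s s) (S j)))"
    by (intro psd_matrix_sum psd_matrix_bbit_entry)
qed (rule psd_matrix_ind_eq psd_matrix_bbit_entry)+

end
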